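(* Let $n,k,r,\delta$ be positive integers with $(r+\delta-1)\mid n$, let $d = n-k+1-\left(\lceil k/r\rceil-1\right)(\delta-1)$, and assume $\delta\le d$. Let $q$ be a prime power with $q>kn^k$. Then there exists an $[n,k,d]$ linear code over $\mathbb{F}_q$ with all-symbol locality $(r,\delta)$, i.e. an $(r,\delta)_a$ code whose minimum distance equals $n-k+1-\left(\lceil k/r\rceil-1\right)(\delta-1)$.
   Context: Coordinate $i$ of a linear code $\mathcal{C}$ of length $n$ has locality $(r,\delta)$ if there is $S_i\subseteq[n]$ with $i\in S_i$, $|S_i|\le r+\delta-1$, such that the punctured code $\mathcal{C}|_{S_i}$ (delete coordinates outside $S_i$) has minimum distance at least $\delta$. A code has all-symbol locality $(r,\delta)$ (is an $(r,\delta)_a$ code) if every one of its $n$ coordinates has locality $(r,\delta)$. *)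

theory Defs
  imports "HOL-Analysis.Analysis" "HOL-Library.Function_Algebras"
begin

text \<open>Vectors of length n over a field are modelled as functions nat => 'a that vanish
  outside the coordinate set {..<n}.  Scalar multiplication is pointwise.\<close>

definition vscale :: "'a::field \<Rightarrow> (nat \<Rightarrow> 'a) \<Rightarrow> (nat \<Rightarrow> 'a)" where
  "vscale c v = (\<lambda>i. c * v i)"

definition ambient :: "nat \<Rightarrow> (nat \<Rightarrow> 'a::zero) set" where
  "ambient n = {v. \<forall>i. n \<le> i \<longrightarrow> v i = 0}"

definition linear_code :: "nat \<Rightarrow> nat \<Rightarrow> (nat \<Rightarrow> 'a::field) set \<Rightarrow> bool" where
  "linear_code n k C \<longleftrightarrow> C \<subseteq> ambient n \<and> module.subspace vscale C
      \<and> vector_space.dim vscale C = k"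

definition hweight :: "nat \<Rightarrow> (nat \<Rightarrow> 'a::zero) \<Rightarrow> nat" where
  "hweight n v = card {i. i < n \<and> v i \<noteq> 0}"

definition min_dist :: "nat \<Rightarrow> (nat \<Rightarrow> 'a::zero) set \<Rightarrow> nat" where
  "min_dist n C = Min (hweight n ` (C - {0}))"

text \<open>Puncturing: keep coordinates in S, delete (zero out) the others.\<close>
definition puncture :: "nat set \<Rightarrow> (nat \<Rightarrow> 'a::zero) set \<Rightarrow> (nat \<Rightarrow> 'a) set" where
  "puncture S C = (\<lambda>v i. if i \<in> S then v i else 0) ` C"

definition min_dist_ge :: "nat \<Rightarrow> (nat \<Rightarrow> 'a::zero) set \<Rightarrow> nat \<Rightarrow> bool" where
  "min_dist_ge n C \<delta> \<longleftrightarrow> (\<forall>c\<in>C. c \<noteq> 0 \<longrightarrow> \<delta> \<le> hweight n c)"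

definition has_locality :: "nat \<Rightarrow> (nat \<Rightarrow> 'a::zero) set \<Rightarrow> nat \<Rightarrow> nat \<Rightarrow> nat \<Rightarrow> bool" where
  "has_locality n C r \<delta> i \<longleftrightarrow>
     (\<exists>S. S \<subseteq> {..<n} \<and> i \<in> S \<and> card S \<le> r + \<delta> - 1 \<and> min_dist_ge n (puncture S C) \<delta>)"

definition all_symbol_locality :: "nat \<Rightarrow> (nat \<Rightarrow> 'a::zero) set \<Rightarrow> nat \<Rightarrow> nat \<Rightarrow> bool" where
  "all_symbol_locality n C r \<delta> \<longleftrightarrow> (\<forall>i<n. has_locality n C r \<delta> i)"

end

(* The code is the row space of a k x n generator matrix whose columns are grouped into blocks
   of g = r + delta - 1 consecutive positions, where in each block the last delta - 1 columns are
   combinations of the first r.  The columns are chosen greedily: a new column must avoid the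
   span of every set of fewer than k earlier columns which, together with the new position, has
   at most r positions in each block.  There are at most k n^k such sets, and since q > k n^k the
   admissible subspace is not covered by their spans.  Hence any at most k columns with at most r
   per block are independent.  On a block this gives a local code of distance at least delta, and
   globally a nonzero message is orthogonal to at most k - 1 + floor((k-1)/r) (delta - 1) columns,
   with equality for a suitable message vanishing on the first that many positions. *)

theory Submission
  imports Defs
begin

section \<open>Finite-field linear algebra\<close>

context vector_space
begin

lemma card_scalars_mult_card_Int_le:
  assumes "finite (UNIV :: 'a set)" and D: "subspace D" "finite D" and U: "subspace U" "\<not> D \<subseteq> U"
  shows "CARD('a) * card (D \<inter> U) \<le> card D"
proof -
  obtain w where w: "w \<in> D" "w \<notin> U"
    using U(2) by blast
  define line where "line = (\<lambda>(a, x). scale a w + x)"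
  have "inj_on line (UNIV \<times> (D \<inter> U))"
  proof (rule inj_onI, clarify)
    fix a b x y assume xy: "x \<in> U" "y \<in> U" and eq: "line (a, x) = line (b, y)"
    have "scale (a - b) w = y - x"
      using eq by (simp add: line_def algebra_simps)
    then have "scale (a - b) w \<in> U" using subspace_diff[OF U(1) xy(2,1)] by simp
    from subspace_scale[OF U(1) this, of "inverse (a - b)"] have "a = b"
      using w(2) by (cases "a = b") simp_all
    then show "a = b \<and> x = y" using eq by (simp add: line_def)
  qed
  moreover have "line ` (UNIV \<times> (D \<inter> U)) \<subseteq> D"
    using w(1) by (auto simp: line_def intro!: subspace_add[OF D(1)] subspace_scale[OF D(1)])
  ultimately have "card ((UNIV :: 'a set) \<times> (D \<inter> U)) \<le> card D"
    using D(2) by (rule card_inj_on_le)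
  then show ?thesis by (simp add: card_cartesian_product)
qed

text \<open>Over a field with q elements, each subspace U not containing D meets D in at most a
  1/q fraction of its vectors, so fewer than q of them cannot cover D.\<close>

lemma subspace_not_covered:
  assumes "finite (UNIV :: 'a set)" and D: "subspace D" "finite D"
    and "finite \<U>" "card \<U> < CARD('a)"
    and \<U>: "\<And>U. U \<in> \<U> \<Longrightarrow> subspace U \<and> \<not> D \<subseteq> U"
  shows "\<exists>x\<in>D. \<forall>U\<in>\<U>. x \<notin> U"
proof (rule ccontr)
  assume "\<not> ?thesis"
  then have "D \<subseteq> (\<Union>U\<in>\<U>. D \<inter> U)" by blast
  then have "CARD('a) * card D \<le> CARD('a) * card (\<Union>U\<in>\<U>. D \<inter> U)"
    using D(2) by (simp add: card_mono)
  also have "\<dots> \<le> CARD('a) * (\<Sum>U\<in>\<U>. card (D \<inter> U))"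
    by (intro mult_le_mono2 card_UN_le) fact
  also have "\<dots> \<le> (\<Sum>U\<in>\<U>. card D)"
    unfolding sum_distrib_left
    using \<U> card_scalars_mult_card_Int_le[OF assms(1) D] by (intro sum_mono) simp
  also have "\<dots> < CARD('a) * card D"
    using \<open>card \<U> < CARD('a)\<close> D subspace_0[OF D(1)] by (auto simp: card_gt_0_iff)
  finally show False by simp
qed

lemma span_subset_if_independent_card_ge:
  assumes W: "finite W" and B: "independent B" "B \<subseteq> span W" and card: "card W \<le> card B"
  shows "span W \<subseteq> span B"
proof (rule span_minimal)
  show "W \<subseteq> span B"
  proof
    fix w assume "w \<in> W"
    show "w \<in> span B"
    proof (rule ccontr)
      assume w: "w \<notin> span B"
      then have "independent (insert w B)"
        using B(1) by (rule independent_insertI)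
      moreover have "insert w B \<subseteq> span W"
        using B(2) \<open>w \<in> W\<close> span_base by blast
      ultimately have "card (insert w B) \<le> card W"
        using independent_span_bound[OF W] by auto
      moreover have "finite B"
        using independent_span_bound[OF W B] by simp
      moreover have "w \<notin> B"
        using w span_base by blast
      ultimately show False
        using card by simp
    qed
  qed
qed (rule subspace_span)

end

section \<open>Vectors of length k\<close>

interpretation VS: vector_space "vscale :: 'a::field \<Rightarrow> (nat \<Rightarrow> 'a) \<Rightarrow> (nat \<Rightarrow> 'a)"
  by unfold_locales (auto simp: vscale_def fun_eq_iff algebra_simps)

interpretation VP: vector_space_pair "vscale :: 'a::field \<Rightarrow> (nat \<Rightarrow> 'a) \<Rightarrow> (nat \<Rightarrow> 'a)"
  "vscale :: 'a::field \<Rightarrow> (nat \<Rightarrow> 'a) \<Rightarrow> (nat \<Rightarrow> 'a)" ..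

lemma sum_fun_apply: "(\<Sum>x\<in>A. f x) i = (\<Sum>x\<in>A. f x i)"
  by (induction A rule: infinite_finite_induct) auto

definition dotp :: "nat \<Rightarrow> (nat \<Rightarrow> 'a::field) \<Rightarrow> (nat \<Rightarrow> 'a) \<Rightarrow> 'a" where
  "dotp k u x = (\<Sum>i<k. u i * x i)"

definition unit_vec :: "nat \<Rightarrow> nat \<Rightarrow> 'a::field" where
  "unit_vec i = (\<lambda>j. if j = i then 1 else 0)"

lemma dotp_eq_0_on_span:
  assumes "\<And>x. x \<in> S \<Longrightarrow> dotp k u x = 0" "x \<in> VS.span S"
  shows "dotp k u x = 0"
  using assms(2)
proof (induction rule: VS.span_induct_alt)
  case (step c x y)
  have "dotp k u (vscale c x + y) = c * dotp k u x + dotp k u y"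
    by (simp add: dotp_def vscale_def distrib_left sum.distrib sum_distrib_left mult.left_commute)
  then show ?case
    by (simp only: assms(1)[OF step(1)] step(2) mult_zero_right add_0)
qed (simp add: dotp_def)

lemma dotp_unit_vec: "i < k \<Longrightarrow> dotp k u (unit_vec i) = u i"
  by (simp add: dotp_def unit_vec_def if_distrib cong: if_cong)

lemma unit_vec_in_ambient: "i < k \<Longrightarrow> unit_vec i \<in> ambient k"
  by (simp add: ambient_def unit_vec_def)

lemma inj_unit_vec: "inj unit_vec"
  by (auto simp: inj_def unit_vec_def fun_eq_iff split: if_splits)

lemma subspace_ambient: "VS.subspace (ambient k)"
  by (auto simp: VS.subspace_def ambient_def vscale_def)

lemma finite_ambient: "finite (ambient k :: (nat \<Rightarrow> 'a::{zero,finite}) set)"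
proof (rule finite_subset)
  show "ambient k \<subseteq> {f :: nat \<Rightarrow> 'a. \<forall>i. (i \<in> {..<k} \<longrightarrow> f i \<in> UNIV) \<and> (i \<notin> {..<k} \<longrightarrow> f i = 0)}"
    by (auto simp: ambient_def)
qed (intro finite_set_of_finite_funs; simp)

lemma in_span_unit_vecs:
  assumes "finite P" "\<And>i. i \<notin> P \<Longrightarrow> v i = 0"
  shows "v \<in> VS.span (unit_vec ` P)"
proof -
  have "v = (\<Sum>i\<in>P. vscale (v i) (unit_vec i))"
    using assms by (auto simp: fun_eq_iff sum_fun_apply vscale_def unit_vec_def if_distrib cong: if_cong)
  also have "\<dots> \<in> VS.span (unit_vec ` P)"
    by (intro VS.span_sum VS.span_scale VS.span_base imageI)
  finally show ?thesis .
qed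

lemma independent_unit_vecs:
  assumes "finite P"
  shows "VS.independent (unit_vec ` P :: (nat \<Rightarrow> 'a::field) set)"
proof (rule VS.independent_if_scalars_zero)
  fix c :: "(nat \<Rightarrow> 'a) \<Rightarrow> 'a" and x :: "nat \<Rightarrow> 'a"
  assume sum0: "(\<Sum>x\<in>unit_vec ` P. vscale (c x) x) = 0" and "x \<in> unit_vec ` P"
  then obtain i where i: "i \<in> P" "x = unit_vec i" by blast
  have "0 = (\<Sum>j\<in>P. vscale (c (unit_vec j)) (unit_vec j :: nat \<Rightarrow> 'a)) i"
    using sum0 by (simp add: sum.reindex inj_on_subset[OF inj_unit_vec])
  also have "\<dots> = c x"
    using i assms by (simp add: sum_fun_apply vscale_def unit_vec_def if_distrib cong: if_cong)
  finally show "c x = 0" ..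
qed (use assms in simp)

lemma card_unit_vecs: "card (unit_vec ` P) = card P"
  by (simp add: card_image inj_on_subset[OF inj_unit_vec])

lemma ambient_eq_span_unit_vecs: "ambient k = VS.span (unit_vec ` {..<k})"
proof
  show "ambient k \<subseteq> VS.span (unit_vec ` {..<k})"
    using leI by (auto simp: ambient_def intro!: in_span_unit_vecs)
  show "VS.span (unit_vec ` {..<k}) \<subseteq> ambient k"
    by (rule VS.span_minimal) (auto simp: subspace_ambient unit_vec_in_ambient)
qed

lemma dim_ambient: "VS.dim (ambient k :: (nat \<Rightarrow> 'a::field) set) = k"
  by (simp add: ambient_eq_span_unit_vecs VS.dim_eq_card_independent
      independent_unit_vecs card_unit_vecs)

lemma eq_0_if_orthogonal_to_spanning:
  assumes u: "u \<in> ambient k" and S: "ambient k \<subseteq> VS.span S"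
    and orth: "\<And>x. x \<in> S \<Longrightarrow> dotp k u x = 0"
  shows "u = 0"
proof
  fix i
  show "u i = 0 i"
  proof (cases "i < k")
    case True
    then have "unit_vec i \<in> VS.span S"
      using S unit_vec_in_ambient by blast
    with orth have "dotp k u (unit_vec i) = 0"
      by (rule dotp_eq_0_on_span)
    then show ?thesis
      by (simp add: dotp_unit_vec[OF True])
  qed (use u in \<open>simp add: ambient_def\<close>)
qed

text \<open>The codeword of the message u for the generator matrix with columns h i, i \<in> I.\<close>

definition encode :: "nat set \<Rightarrow> nat \<Rightarrow> (nat \<Rightarrow> nat \<Rightarrow> 'a::field) \<Rightarrow> (nat \<Rightarrow> 'a) \<Rightarrow> (nat \<Rightarrow> 'a)" where
  "encode I k h u = (\<lambda>i. if i \<in> I then dotp k u (h i) else 0)"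

lemma linear_encode: "Vector_Spaces.linear vscale vscale (encode I k h)"
  by (auto simp: Vector_Spaces.linear_iff VS.vector_space_axioms encode_def dotp_def vscale_def
      fun_eq_iff sum.distrib sum_distrib_left algebra_simps)

lemma exists_nonzero_orthogonal:
  fixes v :: "nat \<Rightarrow> nat \<Rightarrow> 'a::field"
  assumes "finite P" "card P < k"
  shows "\<exists>w\<in>ambient k. w \<noteq> 0 \<and> (\<forall>i\<in>P. dotp k w (v i) = 0)"
proof -
  let ?E = "unit_vec ` {..<k} :: (nat \<Rightarrow> 'a) set"
  have "\<not> inj_on (encode P k v) (ambient k)"
  proof
    assume inj: "inj_on (encode P k v) (ambient k)"
    then have "VS.independent (encode P k v ` ?E)"
      by (intro VP.linear_independent_injective_image[OF linear_encode independent_unit_vecs])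
        (simp_all add: ambient_eq_span_unit_vecs)
    moreover have "encode P k v ` ?E \<subseteq> VS.span (unit_vec ` P)"
      using assms(1) by (auto simp: encode_def intro!: in_span_unit_vecs)
    ultimately have "card (encode P k v ` ?E) \<le> card (unit_vec ` P :: (nat \<Rightarrow> 'a) set)"
      using VS.independent_span_bound[OF finite_imageI[OF assms(1)]] by blast
    moreover have "?E \<subseteq> ambient k"
      using unit_vec_in_ambient by blast
    then have "card (encode P k v ` ?E) = k"
      by (simp add: card_image[OF inj_on_subset[OF inj]] card_unit_vecs)
    ultimately show False
      using assms(2) by (simp add: card_unit_vecs)
  qed
  then obtain w where "w \<in> ambient k" "encode P k v w = 0" "w \<noteq> 0"
    using VP.linear_inj_on_iff_eq_0[OF linear_encode subspace_ambient] by blast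
  moreover have "dotp k w (v i) = 0" if "i \<in> P" for i
    using fun_cong[OF \<open>encode P k v w = 0\<close>, of i] that by (simp add: encode_def)
  ultimately show ?thesis
    by blast
qed

lemma hweight_encode:
  "hweight n (encode {..<n} k h u) = n - card {i. i < n \<and> dotp k u (h i) = 0}"
proof -
  have "{i. i < n \<and> encode {..<n} k h u i \<noteq> 0} = {..<n} - {i. i < n \<and> dotp k u (h i) = 0}"
    by (auto simp: encode_def)
  then show ?thesis
    by (simp add: hweight_def) (subst card_Diff_subset; auto)
qed

section \<open>Blocks of positions\<close>

definition free_block :: "nat \<Rightarrow> nat \<Rightarrow> nat \<Rightarrow> nat set" where
  "free_block r g j = {j * g ..< j * g + r}"

definition block_bounded :: "nat \<Rightarrow> nat \<Rightarrow> nat set \<Rightarrow> bool" where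
  "block_bounded r g T \<longleftrightarrow> (\<forall>j. card {i\<in>T. i div g = j} \<le> r)"

lemma block_eq_atLeastLessThan:
  fixes g :: nat
  assumes "0 < g"
  shows "{i. i div g = j} = {j * g ..< j * g + g}"
proof (intro set_eqI iffI)
  fix i assume "i \<in> {i. i div g = j}"
  moreover have "i = i div g * g + i mod g" "i mod g < g"
    using assms by simp_all
  ultimately show "i \<in> {j * g ..< j * g + g}"
    by simp
qed (auto intro!: div_nat_eqI simp: mult.commute)

lemma card_free_block [simp]: "card (free_block r g j) = r"
  by (simp add: free_block_def)

lemma div_eq_if_mem_free_block: "r \<le> g \<Longrightarrow> i \<in> free_block r g j \<Longrightarrow> i div g = j"
  by (auto simp: free_block_def mult.commute intro!: div_nat_eqI)

lemma mem_free_block_iff: "i \<in> free_block r g (i div g) \<longleftrightarrow> i mod g < r"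
proof -
  have "i = i div g * g + i mod g"
    by simp
  then show ?thesis
    unfolding free_block_def atLeastLessThan_iff by linarith
qed

lemma less_if_mem_free_block: "r \<le> i mod g \<Longrightarrow> x \<in> free_block r g (i div g) \<Longrightarrow> x < i"
proof -
  have "i = i div g * g + i mod g"
    by simp
  then show "r \<le> i mod g \<Longrightarrow> x \<in> free_block r g (i div g) \<Longrightarrow> x < i"
    unfolding free_block_def atLeastLessThan_iff by linarith
qed

lemma block_bounded_subset:
  assumes "block_bounded r g T" "T' \<subseteq> T" "finite T"
  shows "block_bounded r g T'"
  unfolding block_bounded_def
proof
  fix j
  have "card {i\<in>T'. i div g = j} \<le> card {i\<in>T. i div g = j}"
    using assms(2,3) by (intro card_mono) auto
  also have "\<dots> \<le> r"
    using assms(1) by (simp add: block_bounded_def)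
  finally show "card {i\<in>T'. i div g = j} \<le> r" .
qed

lemma block_bounded_if_card_le:
  assumes "finite T" "card T \<le> r"
  shows "block_bounded r g T"
  unfolding block_bounded_def
proof
  fix j
  have "card {i\<in>T. i div g = j} \<le> card T"
    using assms(1) by (intro card_mono) auto
  then show "card {i\<in>T. i div g = j} \<le> r"
    using assms(2) by simp
qed

lemma block_bounded_insert_iff:
  assumes "finite T" "f \<notin> T"
  shows "block_bounded r g (insert f T) \<longleftrightarrow>
    block_bounded r g T \<and> card {i\<in>T. i div g = f div g} < r"
proof -
  have "{i\<in>insert f T. i div g = j} =
      (if j = f div g then insert f {i\<in>T. i div g = j} else {i\<in>T. i div g = j})" for j
    by auto
  then have "card {i\<in>insert f T. i div g = j} =
      (if j = f div g then Suc (card {i\<in>T. i div g = j}) else card {i\<in>T. i div g = j})" for j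
    using assms by simp
  then show ?thesis
    unfolding block_bounded_def by (auto simp: Suc_le_eq)
qed

lemma exists_block_bounded_subset:
  assumes "finite Z"
  shows "\<exists>T\<subseteq>Z. block_bounded r g T \<and>
    card T = (\<Sum>j\<in>(\<lambda>i. i div g) ` Z. min r (card {i\<in>Z. i div g = j}))"
proof -
  let ?B = "\<lambda>j. {i\<in>Z. i div g = j}"
  have "\<forall>j. \<exists>S. S \<subseteq> ?B j \<and> card S = min r (card (?B j)) \<and> finite S"
  proof
    fix j
    obtain S where "S \<subseteq> ?B j" "card S = min r (card (?B j))" "finite S"
      using obtain_subset_with_card_n[OF min.cobounded2] .
    then show "\<exists>S. S \<subseteq> ?B j \<and> card S = min r (card (?B j)) \<and> finite S"
      by blast
  qed
  then obtain S where S: "\<forall>j. S j \<subseteq> ?B j \<and> card (S j) = min r (card (?B j)) \<and> finite (S j)"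
    by (rule choice[THEN exE])
  then have S_sub: "\<And>j. S j \<subseteq> ?B j" and S_fin: "\<And>j. finite (S j)"
    and S_card: "\<And>j. card (S j) = min r (card (?B j))"
    by simp_all
  define T where "T = (\<Union>j\<in>(\<lambda>i. i div g) ` Z. S j)"
  have "T \<subseteq> Z"
    using S_sub unfolding T_def by blast
  moreover have "block_bounded r g T"
    unfolding block_bounded_def
  proof
    fix j
    have "{i\<in>T. i div g = j} \<subseteq> S j"
    proof
      fix i assume "i \<in> {i\<in>T. i div g = j}"
      then obtain j' where "i \<in> S j'" "i div g = j"
        by (auto simp: T_def)
      with S_sub[of j'] show "i \<in> S j"
        by auto
    qed
    then have "card {i\<in>T. i div g = j} \<le> card (S j)"
      by (rule card_mono[OF S_fin])
    then show "card {i\<in>T. i div g = j} \<le> r"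
      by (simp add: S_card)
  qed
  moreover have "card T = (\<Sum>j\<in>(\<lambda>i. i div g) ` Z. card (S j))"
    unfolding T_def
  proof (rule card_UN_disjoint)
    show "\<forall>j\<in>(\<lambda>i. i div g) ` Z. \<forall>j'\<in>(\<lambda>i. i div g) ` Z. j \<noteq> j' \<longrightarrow> S j \<inter> S j' = {}"
    proof (intro ballI impI)
      fix j j' :: nat assume "j \<noteq> j'"
      then show "S j \<inter> S j' = {}"
        using S_sub[of j] S_sub[of j'] by blast
    qed
  qed (use assms S_fin in simp_all)
  ultimately show ?thesis
    by (auto simp: S_card)
qed

text \<open>Pick at most r positions of Z in every block: fewer than k are picked, and each block in
  which r are picked contributes at most \<open>\<delta> - 1\<close> further positions of Z.\<close>

lemma card_le_if_block_bounded_subsets_small: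
  fixes Z :: "nat set"
  assumes "finite Z" "0 < r" "0 < \<delta>" "g = r + \<delta> - 1"
    and small: "\<And>T. T \<subseteq> Z \<Longrightarrow> block_bounded r g T \<Longrightarrow> card T < k"
  shows "card Z \<le> k - 1 + (k - 1) div r * (\<delta> - 1)"
proof -
  let ?J = "(\<lambda>i. i div g) ` Z" and ?B = "\<lambda>j. {i\<in>Z. i div g = j}"
  define A where "A = {j\<in>?J. r \<le> card (?B j)}"
  have fin: "finite ?J" "finite A"
    using assms(1) by (simp_all add: A_def)
  obtain T where "T \<subseteq> Z" "block_bounded r g T" "card T = (\<Sum>j\<in>?J. min r (card (?B j)))"
    using exists_block_bounded_subset[OF assms(1)] by blast
  then have sum_min: "(\<Sum>j\<in>?J. min r (card (?B j))) \<le> k - 1"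
    using small[of T] by linarith
  have block_le: "card (?B j) \<le> min r (card (?B j)) + (if j \<in> A then \<delta> - 1 else 0)"
    if "j \<in> ?J" for j
  proof -
    have "0 < g"
      using assms(2,3,4) by simp
    then have "?B j \<subseteq> {j * g ..< j * g + g}"
      using block_eq_atLeastLessThan[of g j] by blast
    then have "card (?B j) \<le> g"
      using card_mono[of "{j * g ..< j * g + g}" "?B j"] by simp
    then have "card (?B j) \<le> r + (\<delta> - 1)"
      using assms(2,3,4) by simp
    then show ?thesis
      using that by (auto simp: A_def)
  qed
  have "card Z = (\<Sum>j\<in>?J. card (?B j))"
    unfolding card_eq_sum using sum.group[OF assms(1) fin(1) subset_refl, of "\<lambda>_. 1"]
    by (rule sym)
  also have "\<dots> \<le> (\<Sum>j\<in>?J. min r (card (?B j)) + (if j \<in> A then \<delta> - 1 else 0))"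
    by (rule sum_mono) (rule block_le)
  also have "\<dots> = (\<Sum>j\<in>?J. min r (card (?B j))) + card A * (\<delta> - 1)"
    using fin by (simp add: sum.distrib sum.If_cases A_def Int_def)
  finally have "card Z \<le> k - 1 + card A * (\<delta> - 1)"
    using sum_min by linarith
  moreover have "card A * r \<le> k - 1"
  proof -
    have "card A * r = (\<Sum>j\<in>A. min r (card (?B j)))"
      by (simp add: A_def)
    also have "\<dots> \<le> (\<Sum>j\<in>?J. min r (card (?B j)))"
      using fin by (intro sum_mono2) (auto simp: A_def)
    finally show ?thesis
      using sum_min by linarith
  qed
  then have "card A \<le> (k - 1) div r"
    using assms(2) by (simp add: less_eq_div_iff_mult_less_eq)
  ultimately show ?thesis
    using mult_le_mono1[of "card A" "(k - 1) div r" "\<delta> - 1"] by linarith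
qed

section \<open>Greedy construction of the generator matrix\<close>

text \<open>The columns h 0, ..., h (N - 1) of a generator matrix, grouped into blocks of g
  consecutive positions.\<close>

definition good_columns :: "nat \<Rightarrow> nat \<Rightarrow> nat \<Rightarrow> nat \<Rightarrow> (nat \<Rightarrow> nat \<Rightarrow> 'a::field) \<Rightarrow> bool" where
  "good_columns k r g N h \<longleftrightarrow>
     (\<forall>i<N. h i \<in> ambient k) \<and>
     (\<forall>i<N. r \<le> i mod g \<longrightarrow> h i \<in> VS.span (h ` free_block r g (i div g))) \<and>
     (\<forall>T. T \<subseteq> {..<N} \<longrightarrow> card T \<le> k \<longrightarrow> block_bounded r g T \<longrightarrow>
        inj_on h T \<and> VS.independent (h ` T))"

lemma good_columns_0: "good_columns k r g 0 h"
  by (simp add: good_columns_def VS.independent_empty)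

text \<open>Column N is drawn from \<open>admissible_columns\<close> and must avoid the span of the columns in
  each of the \<open>dangerous_sets\<close>.\<close>

definition admissible_columns ::
  "nat \<Rightarrow> nat \<Rightarrow> nat \<Rightarrow> nat \<Rightarrow> (nat \<Rightarrow> nat \<Rightarrow> 'a::field) \<Rightarrow> (nat \<Rightarrow> 'a) set" where
  "admissible_columns k r g N h =
     (if r \<le> N mod g then VS.span (h ` free_block r g (N div g)) else ambient k)"

definition dangerous_sets :: "nat \<Rightarrow> nat \<Rightarrow> nat \<Rightarrow> nat \<Rightarrow> nat set set" where
  "dangerous_sets k r g N = {T. T \<subseteq> {..<N} \<and> card T < k \<and> block_bounded r g (insert N T)}"

lemma subspace_admissible_columns: "VS.subspace (admissible_columns k r g N h)"
  by (simp add: admissible_columns_def subspace_ambient)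

lemma admissible_columns_subset_ambient:
  assumes "good_columns k r g N h"
  shows "admissible_columns k r g N h \<subseteq> ambient k"
proof (cases "r \<le> N mod g")
  case True
  then have "h ` free_block r g (N div g) \<subseteq> ambient k"
    using assms less_if_mem_free_block[OF True] by (auto simp: good_columns_def)
  with True show ?thesis
    by (simp add: admissible_columns_def VS.span_minimal subspace_ambient)
qed (simp add: admissible_columns_def)

lemma good_columns_extend_span:
  assumes good: "good_columns k r g N h" and x: "x \<in> admissible_columns k r g N h"
    and i: "i < Suc N" "r \<le> i mod g"
  shows "(h(N := x)) i \<in> VS.span (h(N := x) ` free_block r g (i div g))"
proof -
  have "free_block r g (i div g) \<subseteq> {..<N}"
  proof
    fix y assume "y \<in> free_block r g (i div g)"
    then have "y < i"
      by (rule less_if_mem_free_block[OF i(2)])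
    with i(1) show "y \<in> {..<N}"
      by simp
  qed
  then have "h(N := x) ` free_block r g (i div g) = h ` free_block r g (i div g)"
    by (auto intro!: image_cong)
  moreover have "(h(N := x)) i \<in> VS.span (h ` free_block r g (i div g))"
  proof (cases "i = N")
    case True
    then show ?thesis
      using x i(2) by (simp add: admissible_columns_def)
  next
    case False
    then show ?thesis
      using good i by (simp add: good_columns_def)
  qed
  ultimately show ?thesis
    by (simp only:)
qed

lemma good_columns_extend_independent:
  assumes good: "good_columns k r g N h"
    and x: "\<forall>T\<in>dangerous_sets k r g N. x \<notin> VS.span (h ` T)"
    and T: "T \<subseteq> {..<Suc N}" "card T \<le> k" "block_bounded r g T"
  shows "inj_on (h(N := x)) T \<and> VS.independent (h(N := x) ` T)"
proof (cases "N \<in> T")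
  case False
  then have "T \<subseteq> {..<N}"
    using T(1) by (auto simp: less_Suc_eq)
  then have "h(N := x) ` T = h ` T" "inj_on (h(N := x)) T = inj_on h T"
    by (auto intro!: image_cong inj_on_cong)
  then show ?thesis
    using good T \<open>T \<subseteq> {..<N}\<close> unfolding good_columns_def by simp
next
  case True
  define T0 where "T0 = T - {N}"
  have T0: "T0 \<subseteq> {..<N}" "T = insert N T0" "N \<notin> T0"
    using T(1) True by (auto simp: T0_def less_Suc_eq)
  then have "card T0 < k" "block_bounded r g T0"
    using T block_bounded_subset[of r g T T0] finite_subset[OF T(1) finite_lessThan]
    by (auto simp: finite_subset)
  then have "inj_on h T0" "VS.independent (h ` T0)" "x \<notin> VS.span (h ` T0)"
    using good T0 x T(3) by (auto simp: good_columns_def dangerous_sets_def)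
  moreover from this(3) have "x \<notin> h ` T0"
    using VS.span_base by blast
  moreover have "T0 - {N} = T0"
    using T0(3) by blast
  ultimately have "inj_on (h(N := x)) T" "VS.independent (insert x (h ` T0))"
    unfolding T0(2) inj_on_insert by (simp_all only: inj_on_fun_updI VS.independent_insertI
      fun_upd_image T0(3) if_False fun_upd_same simp_thms)
  moreover have "h(N := x) ` T = insert x (h ` T0)"
    by (simp only: fun_upd_image if_P[OF True] T0_def)
  ultimately show ?thesis
    by simp
qed

lemma good_columns_extend:
  assumes good: "good_columns k r g N h" and x: "x \<in> admissible_columns k r g N h"
    and x_avoids: "\<forall>T\<in>dangerous_sets k r g N. x \<notin> VS.span (h ` T)"
  shows "good_columns k r g (Suc N) (h(N := x))"
proof -
  have "\<forall>i<Suc N. (h(N := x)) i \<in> ambient k"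
    using good x admissible_columns_subset_ambient[OF good] by (auto simp: good_columns_def less_Suc_eq)
  then show ?thesis
    unfolding good_columns_def
    using good_columns_extend_span[OF good x] good_columns_extend_independent[OF good x_avoids]
    by blast
qed

lemma card_small_subsets_le:
  assumes "N < n"
  shows "card {T. T \<subseteq> {..<N} \<and> card T < k} \<le> k * n ^ k"
proof -
  have "{T. T \<subseteq> {..<N} \<and> card T < k} = (\<Union>s<k. {T. T \<subseteq> {..<N} \<and> card T = s})"
    by auto
  then have "card {T. T \<subseteq> {..<N} \<and> card T < k} \<le> (\<Sum>s<k. card {T. T \<subseteq> {..<N} \<and> card T = s})"
    by (simp add: card_UN_le del: UN_simps)
  also have "\<dots> = (\<Sum>s<k. N choose s)"
    by (simp add: n_subsets)
  also have "\<dots> \<le> (\<Sum>s<k. n ^ k)"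
  proof (rule sum_mono)
    fix s assume "s \<in> {..<k}"
    have "N choose s \<le> N ^ s"
      by (cases "s \<le> N") (auto simp: binomial_le_pow binomial_eq_0)
    also have "\<dots> \<le> n ^ s"
      using assms by (simp add: power_mono)
    also have "\<dots> \<le> n ^ k"
      using assms \<open>s \<in> {..<k}\<close> by (intro power_increasing) auto
    finally show "N choose s \<le> n ^ k" .
  qed
  finally show ?thesis
    by simp
qed

lemma card_dangerous_sets_le:
  assumes "N < n"
  shows "finite (dangerous_sets k r g N)" "card (dangerous_sets k r g N) \<le> k * n ^ k"
proof -
  have sub: "dangerous_sets k r g N \<subseteq> {T. T \<subseteq> {..<N} \<and> card T < k}"
    by (auto simp: dangerous_sets_def)
  moreover have fin: "finite {T. T \<subseteq> {..<N} \<and> card T < k}"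
    by (rule finite_subset[of _ "Pow {..<N}"]) auto
  ultimately show "finite (dangerous_sets k r g N)"
    by (rule finite_subset)
  have "card (dangerous_sets k r g N) \<le> card {T. T \<subseteq> {..<N} \<and> card T < k}"
    using fin sub by (rule card_mono)
  also have "\<dots> \<le> k * n ^ k"
    using assms by (rule card_small_subsets_le)
  finally show "card (dangerous_sets k r g N) \<le> k * n ^ k" .
qed

lemma exists_free_column_outside_span:
  assumes good: "good_columns k r g N h" and "r \<le> g" "r \<le> N mod g"
    and T: "T \<subseteq> {..<N}" "card T < k" "block_bounded r g (insert N T)"
  shows "\<exists>f\<in>free_block r g (N div g). h f \<notin> VS.span (h ` T)"
proof -
  let ?F = "free_block r g (N div g)"
  have fin: "finite T"
    using T(1) by (rule finite_subset) simp
  moreover have "N \<notin> T"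
    using T(1) by auto
  ultimately have small: "card {i\<in>T. i div g = N div g} < r" and "block_bounded r g T"
    using block_bounded_insert_iff T(3) by blast+
  have "card (?F \<inter> T) \<le> card {i\<in>T. i div g = N div g}"
    using fin div_eq_if_mem_free_block[OF \<open>r \<le> g\<close>] by (intro card_mono) auto
  then have "\<not> ?F \<subseteq> T"
    using small by (auto simp: Int_absorb2)
  then obtain f where f: "f \<in> ?F" "f \<notin> T"
    by blast
  have "block_bounded r g (insert f T)"
    using block_bounded_insert_iff[OF fin f(2)] \<open>block_bounded r g T\<close> small
      div_eq_if_mem_free_block[OF \<open>r \<le> g\<close> f(1)] by simp
  moreover have "insert f T \<subseteq> {..<N}"
    using T(1) f(1) less_if_mem_free_block[OF \<open>r \<le> N mod g\<close>] by auto
  moreover have "card (insert f T) \<le> k"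
    using T(2) fin by (simp add: card_insert_if)
  ultimately have "inj_on h (insert f T) \<and> VS.independent (h ` insert f T)"
    using good unfolding good_columns_def by blast
  then have "h f \<notin> VS.span (h ` T)"
    using f(2) by (auto simp: VS.independent_insert)
  with f(1) show ?thesis
    by blast
qed

lemma admissible_columns_not_subset_span:
  assumes good: "good_columns k r g N h" and "r \<le> g" and T: "T \<in> dangerous_sets k r g N"
  shows "\<not> admissible_columns k r g N h \<subseteq> VS.span (h ` T)"
proof (cases "r \<le> N mod g")
  case True
  obtain f where "f \<in> free_block r g (N div g)" "h f \<notin> VS.span (h ` T)"
    using exists_free_column_outside_span[OF good \<open>r \<le> g\<close> True] T
    by (auto simp: dangerous_sets_def)
  moreover from this(1) have "h f \<in> admissible_columns k r g N h"
    unfolding admissible_columns_def if_P[OF True] by (intro VS.span_base imageI)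
  ultimately show ?thesis
    by blast
next
  case False
  have "finite T" "card T < k"
    using T finite_subset[OF _ finite_lessThan] by (auto simp: dangerous_sets_def)
  then have "card (h ` T) < k"
    using card_image_le[of T h] by linarith
  with \<open>finite T\<close> have "\<not> ambient k \<subseteq> VS.span (h ` T)"
    using VS.dim_le_card[of "ambient k" "h ` T"] by (auto simp: dim_ambient)
  then show ?thesis
    unfolding admissible_columns_def if_not_P[OF False] .
qed

lemma exists_good_column:
  fixes h :: "nat \<Rightarrow> nat \<Rightarrow> 'a::{field,finite}"
  assumes good: "good_columns k r g N h" and "N < n" "k * n ^ k < CARD('a)" "r \<le> g"
  shows "\<exists>x\<in>admissible_columns k r g N h. \<forall>T\<in>dangerous_sets k r g N. x \<notin> VS.span (h ` T)"
proof -
  let ?\<U> = "(\<lambda>T. VS.span (h ` T)) ` dangerous_sets k r g N"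
  have "finite (admissible_columns k r g N h)"
    using admissible_columns_subset_ambient[OF good] finite_ambient by (rule finite_subset)
  moreover have "finite ?\<U>" "card ?\<U> < CARD('a)"
    using card_dangerous_sets_le[OF \<open>N < n\<close>, of k r g] card_image_le assms(3)
    by (simp, meson le_less_trans)
  moreover have "VS.subspace U \<and> \<not> admissible_columns k r g N h \<subseteq> U" if "U \<in> ?\<U>" for U
    using that admissible_columns_not_subset_span[OF good \<open>r \<le> g\<close>] by auto
  ultimately have "\<exists>x\<in>admissible_columns k r g N h. \<forall>U\<in>?\<U>. x \<notin> U"
    by (intro VS.subspace_not_covered[OF finite_class.finite_UNIV subspace_admissible_columns])
  then show ?thesis
    by simp
qed

lemma exists_good_columns:
  assumes "N \<le> n" "k * n ^ k < CARD('a::{field,finite})" "r \<le> g"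
  shows "\<exists>h :: nat \<Rightarrow> nat \<Rightarrow> 'a. good_columns k r g N h"
  using assms(1)
proof (induction N)
  case 0
  show ?case
    using good_columns_0 by blast
next
  case (Suc N)
  then obtain h :: "nat \<Rightarrow> nat \<Rightarrow> 'a" where "good_columns k r g N h"
    by auto
  moreover have "N < n"
    using Suc.prems by simp
  ultimately show ?case
    using exists_good_column[OF _ _ assms(2,3)] good_columns_extend by blast
qed

section \<open>The code and its parameters\<close>

definition code :: "nat \<Rightarrow> nat \<Rightarrow> (nat \<Rightarrow> nat \<Rightarrow> 'a::field) \<Rightarrow> (nat \<Rightarrow> 'a) set" where
  "code n k h = encode {..<n} k h ` ambient k"

lemma code_subset_ambient: "code n k h \<subseteq> ambient n"
  by (auto simp: code_def encode_def ambient_def)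

lemma subspace_code: "VS.subspace (code n k h)"
  unfolding code_def by (rule VP.linear_subspace_image[OF linear_encode subspace_ambient])

context
  fixes n k r \<delta> g :: nat and h :: "nat \<Rightarrow> nat \<Rightarrow> 'a::{field,finite}"
  assumes good: "good_columns k r g n h" and g: "g = r + \<delta> - 1"
    and pos: "0 < k" "0 < r" "0 < \<delta>"
begin

lemma in_span_free_block: "i < n \<Longrightarrow> h i \<in> VS.span (h ` free_block r g (i div g))"
  using good mem_free_block_iff[of i r g] by (cases "r \<le> i mod g") (auto simp: good_columns_def
      intro: VS.span_base)

lemma eq_0_if_orthogonal_block_bounded:
  assumes u: "u \<in> ambient k" and T: "T \<subseteq> {..<n}" "card T = k" "block_bounded r g T"
    and orth: "\<And>i. i \<in> T \<Longrightarrow> dotp k u (h i) = 0"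
  shows "u = 0"
proof -
  have "inj_on h T \<and> VS.independent (h ` T)"
    using good T unfolding good_columns_def by simp
  moreover have "h ` T \<subseteq> VS.span (unit_vec ` {..<k})"
    using good T(1) by (auto simp: good_columns_def ambient_eq_span_unit_vecs[symmetric])
  ultimately have "ambient k \<subseteq> VS.span (h ` T)"
    unfolding ambient_eq_span_unit_vecs using T(2)
    by (intro VS.span_subset_if_independent_card_ge) (simp_all add: card_unit_vecs card_image)
  then show ?thesis
    using eq_0_if_orthogonal_to_spanning[OF u] orth by blast
qed

lemma card_zeros_le:
  assumes "u \<in> ambient k" "u \<noteq> 0"
  shows "card {i. i < n \<and> dotp k u (h i) = 0} \<le> k - 1 + (k - 1) div r * (\<delta> - 1)"
proof (rule card_le_if_block_bounded_subsets_small[OF _ pos(2,3) g])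
  fix T assume T: "T \<subseteq> {i. i < n \<and> dotp k u (h i) = 0}" "block_bounded r g T"
  show "card T < k"
  proof (rule ccontr)
    assume "\<not> card T < k"
    then obtain T' where T': "T' \<subseteq> T" "card T' = k"
      by (meson not_less obtain_subset_with_card_n)
    have "finite T"
      using T(1) by (rule finite_subset) simp
    then have "block_bounded r g T'"
      using block_bounded_subset T(2) T'(1) by blast
    then have "u = 0"
      using T T' by (intro eq_0_if_orthogonal_block_bounded[OF assms(1) _ T'(2)]) auto
    with assms(2) show False ..
  qed
qed simp

lemma inj_on_encode:
  assumes "k - 1 + (k - 1) div r * (\<delta> - 1) < n"
  shows "inj_on (encode {..<n} k h) (ambient k)"
  unfolding VP.linear_inj_on_iff_eq_0[OF linear_encode subspace_ambient]
proof (intro ballI impI)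
  fix u assume u: "u \<in> ambient k" "encode {..<n} k h u = 0"
  have "dotp k u (h i) = 0" if "i < n" for i
    using fun_cong[OF u(2), of i] that by (simp add: encode_def)
  then have "{i. i < n \<and> dotp k u (h i) = 0} = {..<n}"
    by auto
  then show "u = 0"
    using card_zeros_le[OF u(1)] assms by force
qed

lemma dim_code:
  assumes "k - 1 + (k - 1) div r * (\<delta> - 1) < n"
  shows "VS.dim (code n k h) = k"
proof -
  let ?f = "encode {..<n} k h" and ?E = "unit_vec ` {..<k} :: (nat \<Rightarrow> 'a) set"
  have inj: "inj_on ?f (VS.span ?E)"
    using inj_on_encode[OF assms] by (simp add: ambient_eq_span_unit_vecs)
  have "code n k h = VS.span (?f ` ?E)"
    by (simp add: code_def ambient_eq_span_unit_vecs VP.linear_span_image[OF linear_encode])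
  moreover have "VS.independent (?f ` ?E)"
    using VP.linear_independent_injective_image[OF linear_encode independent_unit_vecs inj] by simp
  then have "VS.dim (VS.span (?f ` ?E)) = card (?f ` ?E)"
    by (rule VS.dim_span_eq_card_independent)
  moreover have "card (?f ` ?E) = k"
    using inj_on_subset[OF inj VS.span_superset] by (simp add: card_image card_unit_vecs)
  ultimately show ?thesis
    by simp
qed

text \<open>Among the first \<open>k - 1 + (k - 1) div r * (\<delta> - 1)\<close> positions at most \<open>k - 1\<close> are
  free, and every other one lies in a block whose free block is entirely among them; so a message
  orthogonal to these free columns is orthogonal to all of the first columns.\<close>

lemma exists_nonzero_vanishing_prefix:
  assumes "k - 1 + (k - 1) div r * (\<delta> - 1) \<le> n"
  shows "\<exists>w\<in>ambient k. w \<noteq> 0 \<and> (\<forall>i < k - 1 + (k - 1) div r * (\<delta> - 1). dotp k w (h i) = 0)"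
proof -
  define c where "c = (k - 1) div r"
  define M where "M = k - 1 + c * (\<delta> - 1)"
  define P where "P = (\<Union>j<c. free_block r g j) \<union> {c * g ..< M}"
  have "c * r \<le> k - 1" and cg: "c * g = c * r + c * (\<delta> - 1)"
    using g pos by (simp_all add: c_def algebra_simps)
  have "card P \<le> (\<Sum>j<c. card (free_block r g j)) + card {c * g ..< M}"
    unfolding P_def by (rule order_trans[OF card_Un_le add_mono[OF card_UN_le]]) simp_all
  also have "\<dots> \<le> k - 1"
    using \<open>c * r \<le> k - 1\<close> cg by (simp add: M_def)
  finally have "card P < k"
    using pos(1) by simp
  moreover have "finite P"
    by (simp add: P_def free_block_def)
  ultimately obtain w where w: "w \<in> ambient k" "w \<noteq> 0" "\<And>i. i \<in> P \<Longrightarrow> dotp k w (h i) = 0"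
    using exists_nonzero_orthogonal[of P k h] by blast
  have "dotp k w (h i) = 0" if "i < M" for i
  proof (cases "i \<in> P")
    case False
    then have "i < c * g"
      using that by (auto simp: P_def)
    then have "i div g < c"
      by (simp add: less_mult_imp_div_less)
    then have "free_block r g (i div g) \<subseteq> P"
      by (auto simp: P_def)
    then have "\<And>x. x \<in> h ` free_block r g (i div g) \<Longrightarrow> dotp k w x = 0"
      using w(3) by blast
    moreover have "i < n"
      using that assms by (simp add: M_def c_def)
    then have "h i \<in> VS.span (h ` free_block r g (i div g))"
      by (rule in_span_free_block)
    ultimately show ?thesis
      by (rule dotp_eq_0_on_span)
  qed (rule w(3))
  then show ?thesis
    using w(1,2) by (auto simp: M_def c_def)
qed

lemma dotp_eq_0_on_block:
  assumes u: "u \<in> ambient k" and R: "R \<subseteq> {i. i < n \<and> i div g = j}" "card R = min r k"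
    and orth: "\<forall>i\<in>R. dotp k u (h i) = 0" and l: "l < n" "l div g = j"
  shows "dotp k u (h l) = 0"
proof -
  have "R \<subseteq> {..<n}"
    using R(1) by auto
  moreover have "block_bounded r g R"
    using R(2) finite_subset[OF \<open>R \<subseteq> {..<n}\<close>] by (simp add: block_bounded_if_card_le)
  ultimately have indep: "inj_on h R \<and> VS.independent (h ` R)"
    using good R(2) unfolding good_columns_def by simp
  show ?thesis
  proof (cases "k \<le> r")
    case True
    then have "u = 0"
      using \<open>R \<subseteq> {..<n}\<close> R(2) \<open>block_bounded r g R\<close> orth
      by (intro eq_0_if_orthogonal_block_bounded[OF u]) auto
    then show ?thesis
      by (simp add: dotp_def)
  next
    case False
    let ?F = "h ` free_block r g j"
    have "h ` R \<subseteq> VS.span ?F"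
    proof
      fix y assume "y \<in> h ` R"
      then obtain i where "i \<in> R" "y = h i"
        by blast
      with R(1) in_span_free_block[of i] show "y \<in> VS.span ?F"
        by auto
    qed
    moreover have "card ?F \<le> card (h ` R)"
      using card_image_le[of "free_block r g j" h] R(2) False indep
      by (simp add: card_image free_block_def)
    ultimately have "VS.span ?F \<subseteq> VS.span (h ` R)"
      using indep by (intro VS.span_subset_if_independent_card_ge) (simp_all add: free_block_def)
    moreover have "h l \<in> VS.span ?F"
      using in_span_free_block[OF l(1)] l(2) by simp
    ultimately have "h l \<in> VS.span (h ` R)"
      by blast
    moreover have "\<And>y. y \<in> h ` R \<Longrightarrow> dotp k u y = 0"
      using orth by blast
    ultimately show ?thesis
      by (rule dotp_eq_0_on_span[rotated])
  qed
qed

lemma hweight_puncture_block_ge: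
  assumes S: "{l. l div g = j} \<subseteq> {..<n}"
    and x: "x \<in> puncture {l. l div g = j} (code n k h)" "x \<noteq> 0"
  shows "\<delta> \<le> hweight n x"
proof (rule ccontr)
  assume "\<not> \<delta> \<le> hweight n x"
  let ?S = "{l. l div g = j}"
  from x(1) obtain u where u: "u \<in> ambient k"
    and x_eq: "x = (\<lambda>l. if l \<in> ?S then encode {..<n} k h u l else 0)"
    unfolding puncture_def code_def by blast
  define Z where "Z = {l\<in>?S. dotp k u (h l) = 0}"
  have "0 < g"
    using g pos by simp
  have "{l. l < n \<and> x l \<noteq> 0} = ?S - Z"
    using S by (auto simp: x_eq Z_def encode_def)
  moreover have "card (?S - Z) = card ?S - card Z"
    using block_eq_atLeastLessThan[OF \<open>0 < g\<close>] by (intro card_Diff_subset) (auto simp: Z_def)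
  ultimately have "card ?S - card Z < \<delta>"
    using \<open>\<not> \<delta> \<le> hweight n x\<close> by (simp add: hweight_def)
  moreover have "card ?S = r + \<delta> - 1"
    using block_eq_atLeastLessThan[OF \<open>0 < g\<close>] g by simp
  ultimately have "min r k \<le> card Z"
    using pos by linarith
  then obtain R where R: "R \<subseteq> Z" "card R = min r k"
    by (rule obtain_subset_with_card_n)
  have R_sub: "R \<subseteq> {l. l < n \<and> l div g = j}"
    using R(1) S unfolding Z_def by auto
  have R_orth: "\<forall>l\<in>R. dotp k u (h l) = 0"
    using R(1) unfolding Z_def by blast
  have "dotp k u (h l) = 0" if "l \<in> ?S" for l
    using that S by (intro dotp_eq_0_on_block[OF u R_sub R(2) R_orth]) auto
  then have "x = 0"
    by (simp add: x_eq encode_def fun_eq_iff)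
  with x(2) show False ..
qed

lemma has_locality_code:
  assumes "g dvd n" "i < n"
  shows "has_locality n (code n k h) r \<delta> i"
proof -
  let ?S = "{l. l div g = i div g}"
  have "0 < g"
    using g pos by simp
  have "n div g * g = n"
    using assms(1) by simp
  moreover have "i div g < n div g"
    using assms(2) \<open>n div g * g = n\<close> by (metis less_mult_imp_div_less)
  then have "Suc (i div g) * g \<le> n div g * g"
    by (intro mult_le_mono1) simp
  ultimately have "?S \<subseteq> {..<n}"
    using block_eq_atLeastLessThan[OF \<open>0 < g\<close>] by auto
  moreover have "card ?S = r + \<delta> - 1"
    using block_eq_atLeastLessThan[OF \<open>0 < g\<close>] g by simp
  ultimately show ?thesis
    unfolding has_locality_def min_dist_ge_def using hweight_puncture_block_ge
    by (intro exI[of _ ?S]) simp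
qed

lemma min_dist_code:
  assumes "k - 1 + (k - 1) div r * (\<delta> - 1) < n"
  shows "min_dist n (code n k h) = n - (k - 1 + (k - 1) div r * (\<delta> - 1))"
proof -
  let ?M = "k - 1 + (k - 1) div r * (\<delta> - 1)" and ?f = "encode {..<n} k h"
  have weight_ge: "n - ?M \<le> hweight n c" if c: "c \<in> code n k h - {0}" for c
  proof -
    obtain u where "u \<in> ambient k" "c = ?f u"
      using c by (auto simp: code_def)
    moreover have "u \<noteq> 0"
      using c calculation VP.linear_0[OF linear_encode] by auto
    ultimately show ?thesis
      using card_zeros_le[of u] by (simp add: hweight_encode diff_le_mono2)
  qed
  obtain w where w: "w \<in> ambient k" "w \<noteq> 0" "\<forall>i<?M. dotp k w (h i) = 0"
    using exists_nonzero_vanishing_prefix[OF less_imp_le[OF assms]] by blast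
  have "?f w \<noteq> ?f 0"
    using inj_onD[OF inj_on_encode[OF assms] _ w(1) VS.subspace_0[OF subspace_ambient]] w(2) by blast
  moreover have "?f 0 = 0"
    by (rule VP.linear_0[OF linear_encode])
  ultimately have fw: "?f w \<in> code n k h - {0}"
    using w(1) by (simp add: code_def)
  have "{..<?M} \<subseteq> {i. i < n \<and> dotp k w (h i) = 0}"
    using w(3) assms by auto
  then have weight_le: "hweight n (?f w) \<le> n - ?M"
    using card_mono[of "{i. i < n \<and> dotp k w (h i) = 0}" "{..<?M}"] by (simp add: hweight_encode)
  have fin: "finite (hweight n ` (code n k h - {0}))"
    by (simp add: code_def finite_ambient)
  have "Min (hweight n ` (code n k h - {0})) \<le> n - ?M"
    using Min_le[OF fin imageI[OF fw]] weight_le by linarith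
  moreover have "n - ?M \<le> Min (hweight n ` (code n k h - {0}))"
    using fw weight_ge by (intro Min.boundedI[OF fin]) auto
  ultimately show ?thesis
    by (simp add: min_dist_def)
qed

end

lemma ceiling_of_nat_divide:
  assumes "0 < k" "0 < r"
  shows "\<lceil>real k / real r\<rceil> = int ((k - 1) div r) + 1"
proof (rule ceiling_unique)
  define c where "c = (k - 1) div r"
  have "k - 1 = c * r + (k - 1) mod r" "(k - 1) mod r < r"
    using assms(2) by (simp_all add: c_def)
  then have "c * r < k" "k \<le> (c + 1) * r"
    using assms(1) by (linarith, simp add: algebra_simps)
  then have "real (c * r) < real k" "real k \<le> real ((c + 1) * r)"
    by (simp_all only: of_nat_less_iff of_nat_le_iff)
  then show "real_of_int (int ((k - 1) div r) + 1) - 1 < real k / real r"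
    and "real k / real r \<le> real_of_int (int ((k - 1) div r) + 1)"
    using assms(2) by (simp_all add: c_def field_simps)
qed

theorem theorem5:
  fixes n k r \<delta> :: nat
  assumes "0 < n" "0 < k" "0 < r" "0 < \<delta>"
    and "(r + \<delta> - 1) dvd n"
    and "int \<delta> \<le> int n - int k + 1 - (\<lceil>real k / real r\<rceil> - 1) * (int \<delta> - 1)"
    and "CARD('a::{field,finite}) > k * n ^ k"
  shows "\<exists>C :: (nat \<Rightarrow> 'a) set. linear_code n k C \<and> all_symbol_locality n C r \<delta> \<and>
           int (min_dist n C) = int n - int k + 1 - (\<lceil>real k / real r\<rceil> - 1) * (int \<delta> - 1)"
proof -
  define M where "M = k - 1 + (k - 1) div r * (\<delta> - 1)"
  have M_eq: "int M = int k - 1 + (\<lceil>real k / real r\<rceil> - 1) * (int \<delta> - 1)"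
    using assms(2,3,4) by (simp add: M_def ceiling_of_nat_divide)
  then have "M < n"
    using assms(4,6) by linarith
  obtain h :: "nat \<Rightarrow> nat \<Rightarrow> 'a" where good: "good_columns k r (r + \<delta> - 1) n h"
    using exists_good_columns[OF le_refl assms(7)] assms(4) by fastforce
  have "linear_code n k (code n k h)"
    unfolding linear_code_def
    using code_subset_ambient[of n k h] subspace_code[of n k h]
      dim_code[OF good refl assms(2,3,4)] \<open>M < n\<close>
    by (simp add: M_def)
  moreover have "all_symbol_locality n (code n k h) r \<delta>"
    unfolding all_symbol_locality_def
    using has_locality_code[OF good refl assms(2,3,4,5)] by blast
  moreover have "min_dist n (code n k h) = n - M"
    using min_dist_code[OF good refl assms(2,3,4)] \<open>M < n\<close> by (simp add: M_def)
  ultimately show ?thesis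
    using M_eq \<open>M < n\<close> by (intro exI[of _ "code n k h"]) simp
qed

end
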